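(* Let $V$ be a finite set with $n:=|V|$, and let $E^+,E^-\subseteq\binom{V}{2}$. Set \[ \mathcal{C}:=\{X\in\mathbb{S}^V_+ : \operatorname{tr}(X)=1,\ X_{ij}\ge 0\ \forall ij\in E^+,\ X_{ij}\le 0\ \forall ij\in E^-\} \] and let $H:=(V,E^+\cup E^-)$. Then the set of vertices of $\mathcal{C}$ is $\{e_ke_k^{\mathsf T} : k\in V,\ \deg_H(k)=n-1\}$.
   Context: $\mathbb{S}^V_+$ denotes the real symmetric positive semidefinite matrices indexed by $V$, with trace inner product; $e_k$ are standard basis vectors of $\mathbb{R}^V$; $\deg_H(k)$ is the degree of $k$ in the graph $H$. For a convex set $\mathcal{C}$ in a finite-dimensional space $\mathbb{E}$ and $\bar x\in\mathcal{C}$, the normal cone is $N_{\mathcal{C}}(\bar x):=\{c : \langle c,x\rangle\le\langle c,\bar x\rangle\ \forall x\in\mathcal{C}\}$; $\bar x$ is a vertex if $\dim N_{\mathcal{C}}(\bar x)=\dim\mathbb{E}$ (here $\mathbb{E}=\mathbb{S}^V$). *)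

theory Defs
  imports "HOL-Analysis.Analysis"
begin

text \<open>Symmetric matrices indexed by a finite type 'n (the vertex set V = UNIV).\<close>
definition sym_mats :: "(real^'n^'n) set" where
  "sym_mats = {X. transpose X = X}"

definition psd_mats :: "(real^'n^'n) set" where
  "psd_mats = {X. transpose X = X \<and> (\<forall>x. 0 \<le> x \<bullet> (X *v x))}"

definition trace_inner :: "real^'n^'n \<Rightarrow> real^'n^'n \<Rightarrow> real" where
  "trace_inner A B = trace (transpose A ** B)"

definition normal_cone :: "(real^'n^'n) set \<Rightarrow> real^'n^'n \<Rightarrow> (real^'n^'n) set" where
  "normal_cone C xb = {c \<in> sym_mats. \<forall>x\<in>C. trace_inner c x \<le> trace_inner c xb}"

definition vertices :: "(real^'n^'n) set \<Rightarrow> (real^'n^'n) set" where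
  "vertices C = {xb \<in> C. dim (normal_cone C xb) = dim (sym_mats :: (real^'n^'n) set)}"

definition specC :: "'n set set \<Rightarrow> 'n set set \<Rightarrow> (real^'n^'n) set" where
  "specC Ep Em = {X \<in> psd_mats. trace X = 1
      \<and> (\<forall>i j. {i,j} \<in> Ep \<longrightarrow> X$i$j \<ge> 0)
      \<and> (\<forall>i j. {i,j} \<in> Em \<longrightarrow> X$i$j \<le> 0)}"

definition graph_deg :: "'n set set \<Rightarrow> 'n \<Rightarrow> nat" where
  "graph_deg E k = card {j. {k,j} \<in> E}"

definition ekek :: "'n \<Rightarrow> real^'n^'n" where
  "ekek k = (\<chi> i j. (axis k (1::real))$i * (axis k (1::real))$j)"

end

theory Submission
  imports Defs
begin

text \<open>
  A point X of C is a vertex iff its normal cone spans the symmetric matrices, i.e. iff no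
  nonzero symmetric W is orthogonal to all normal vectors at X. Since C is the trace-one slice
  of a convex cone K (psd matrices with the sign pattern of E+ and E-), a normal vector c at X
  satisfies c . Y <= tr(Y) (c . X) on all of K; hence whenever X + t D + t^2 Q stays in K for
  small |t|, the direction W = D - tr(D) X is orthogonal to every normal vector.

  Rescaling row and column i of a vertex X gives such a curve with W_ii = 2 X_ii (1 - X_ii), so
  every diagonal entry is 0 or 1 and X = e_k e_k^T. Shifting weight from e_k e_k^T towards
  e_j e_j^T through the entries kj, jk stays in K when kj is not an edge of H, and gives
  W = e_k e_j^T + e_j e_k^T; so k is adjacent to all other vertices. Conversely, if it is, the
  normal cone at e_k e_k^T contains e_k e_k^T, - e_a e_a^T (a <> k), a suitably signed
  e_k e_b^T + e_b e_k^T, and e_a e_b^T + e_b e_a^T - e_a e_a^T - e_b e_b^T (a, b <> k), which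
  leave no nonzero symmetric matrix orthogonal to all of them.
\<close>

section \<open>Matrix units and symmetric matrices\<close>

lemma trace_inner_eq_inner: "trace_inner A B = A \<bullet> B"
  unfolding trace_inner_def trace_def matrix_matrix_mult_def transpose_def inner_vec_def
  by (simp, rule sum.swap)

lemma trace_scaleR: "trace (r *\<^sub>R A) = r * trace (A::real^'n^'n)"
  by (simp add: trace_def sum_distrib_left)

lemma quadratic_form_axis: "axis a 1 \<bullet> (X *v axis b 1) = X $ a $ b"
  by (simp add: inner_axis' matrix_vector_mult_basis column_def)

definition matrix_unit :: "'n::finite \<Rightarrow> 'n \<Rightarrow> real^'n^'n" where
  "matrix_unit a b = axis a (axis b 1)"

lemma matrix_unit_component [simp]:
  "matrix_unit a b $ r $ s = (if r = a \<and> s = b then 1 else 0)"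
  by (simp add: matrix_unit_def axis_def)

lemma inner_matrix_unit [simp]: "matrix_unit a b \<bullet> X = X $ a $ b"
  by (simp add: matrix_unit_def inner_axis')

lemma trace_matrix_unit: "trace (matrix_unit a b) = (if a = b then 1 else 0)"
  by (cases "a = b") (auto simp: trace_def intro!: sum.neutral)

lemma quadratic_form_matrix_unit: "x \<bullet> (matrix_unit a b *v x) = x $ a * x $ b"
proof -
  have "matrix_unit a b *v x = axis a (x $ b)"
    by (simp add: vec_eq_iff matrix_vector_mult_def axis_def if_distrib[of "\<lambda>y. y * _"] cong: if_cong)
  then show ?thesis
    by (simp add: inner_axis)
qed

lemma ekek_eq_matrix_unit: "ekek k = matrix_unit k k"
  by (simp add: ekek_def vec_eq_iff axis_def)

definition sym_matrix_unit :: "'n::finite \<Rightarrow> 'n \<Rightarrow> real^'n^'n" where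
  "sym_matrix_unit a b = matrix_unit a b + matrix_unit b a"

lemma inner_sym_matrix_unit [simp]: "sym_matrix_unit a b \<bullet> X = X $ a $ b + X $ b $ a"
  by (simp add: sym_matrix_unit_def inner_add_left)

lemma sym_mats_iff: "X \<in> sym_mats \<longleftrightarrow> (\<forall>a b. X $ a $ b = X $ b $ a)"
  by (auto simp: sym_mats_def transpose_def vec_eq_iff)

lemma subspace_sym_mats: "subspace sym_mats"
  unfolding subspace_def by (auto simp: sym_mats_iff)

lemma matrix_unit_diag_in_sym_mats: "matrix_unit a a \<in> sym_mats"
  by (simp add: sym_mats_iff conj_commute)

lemma sym_matrix_unit_in_sym_mats: "sym_matrix_unit a b \<in> sym_mats"
  unfolding sym_mats_iff sym_matrix_unit_def by (simp add: conj_commute add.commute)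

section \<open>Vertices as points without orthogonal symmetric directions\<close>

lemma span_eq_iff_no_orthogonal:
  fixes S U :: "'a::euclidean_space set"
  assumes "S \<subseteq> U" "subspace U"
  shows "span S = U \<longleftrightarrow> (\<forall>w\<in>U. (\<forall>s\<in>S. s \<bullet> w = 0) \<longrightarrow> w = 0)"
proof
  assume eq: "span S = U"
  show "\<forall>w\<in>U. (\<forall>s\<in>S. s \<bullet> w = 0) \<longrightarrow> w = 0"
  proof (intro ballI impI)
    fix w assume w: "w \<in> U" "\<forall>s\<in>S. s \<bullet> w = 0"
    have "orthogonal w w"
    proof (rule orthogonal_to_span)
      show "w \<in> span S" using eq w(1) by simp
      show "orthogonal w s" if "s \<in> S" for s
        using w(2) that by (simp add: orthogonal_def inner_commute)
    qed
    then show "w = 0" by (simp add: orthogonal_self)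
  qed
next
  assume no_orth: "\<forall>w\<in>U. (\<forall>s\<in>S. s \<bullet> w = 0) \<longrightarrow> w = 0"
  have span_U: "span U = U"
    using assms(2) by simp
  have "span S \<subseteq> U"
    using assms by (simp add: span_minimal)
  moreover have "\<not> span S \<subset> span U"
  proof
    assume "span S \<subset> span U"
    then obtain w where w: "w \<noteq> 0" "w \<in> span U" "\<And>y. y \<in> span S \<Longrightarrow> orthogonal w y"
      by (erule orthogonal_to_subspace_exists_gen)
    have "\<forall>s\<in>S. s \<bullet> w = 0"
      using w(3) span_base by (force simp: orthogonal_def inner_commute)
    then have "w = 0"
      using no_orth w(2) span_U by blast
    with w(1) show False ..
  qed
  ultimately show "span S = U"
    using span_U by blast
qed

lemma normal_cone_subset_sym_mats: "normal_cone C X \<subseteq> sym_mats"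
  by (auto simp: normal_cone_def)

lemma vertices_iff_no_orthogonal:
  fixes C :: "(real^'n::finite^'n) set"
  shows "X \<in> vertices C \<longleftrightarrow> X \<in> C \<and>
     (\<forall>W\<in>sym_mats. (\<forall>c\<in>normal_cone C X. c \<bullet> W = 0) \<longrightarrow> W = 0)"
proof -
  have "dim (normal_cone C X) = dim (sym_mats :: (real^'n^'n) set)
        \<longleftrightarrow> span (normal_cone C X) = sym_mats"
  proof
    assume "dim (normal_cone C X) = dim (sym_mats :: (real^'n^'n) set)"
    then have "span (normal_cone C X) = span sym_mats"
      by (intro dim_eq_span normal_cone_subset_sym_mats) simp
    then show "span (normal_cone C X) = sym_mats"
      using subspace_sym_mats by simp
  next
    assume "span (normal_cone C X) = sym_mats"
    then show "dim (normal_cone C X) = dim (sym_mats :: (real^'n^'n) set)"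
      by (metis dim_span)
  qed
  then show ?thesis
    by (simp add: vertices_def span_eq_iff_no_orthogonal[OF normal_cone_subset_sym_mats subspace_sym_mats])
qed

lemma normal_cone_iff_inner:
  "c \<in> normal_cone C X \<longleftrightarrow> c \<in> sym_mats \<and> (\<forall>Y\<in>C. c \<bullet> Y \<le> c \<bullet> X)"
  by (simp add: normal_cone_def trace_inner_eq_inner)

section \<open>Positive semidefinite matrices\<close>

lemma psd_mats_iff: "X \<in> psd_mats \<longleftrightarrow> X \<in> sym_mats \<and> (\<forall>x. 0 \<le> x \<bullet> (X *v x))"
  by (simp add: psd_mats_def sym_mats_def)

lemma quadratic_form_two_axes:
  assumes "X \<in> sym_mats"
  shows "(p *\<^sub>R axis a 1 + q *\<^sub>R axis b 1) \<bullet> (X *v (p *\<^sub>R axis a 1 + q *\<^sub>R axis b 1))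
           = p * p * X $ a $ a + 2 * p * q * X $ a $ b + q * q * X $ b $ b"
  using assms by (simp add: algebra_simps quadratic_form_axis sym_mats_iff)

lemma psd_two_axes_nonneg:
  assumes "X \<in> psd_mats"
  shows "0 \<le> p * p * X $ a $ a + 2 * p * q * X $ a $ b + q * q * X $ b $ b"
  using assms quadratic_form_two_axes by (metis psd_mats_iff)

lemma psd_diag_nonneg: "X \<in> psd_mats \<Longrightarrow> 0 \<le> X $ a $ a"
  using psd_two_axes_nonneg[of X 1 a 0 a] by simp

lemma psd_diag_le_trace: "X \<in> psd_mats \<Longrightarrow> X $ a $ a \<le> trace X"
  unfolding trace_def by (rule member_le_sum) (auto simp: psd_diag_nonneg)

lemma psd_zero_diag_imp_zero_row:
  assumes "X \<in> psd_mats" "X $ a $ a = 0"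
  shows "X $ a $ b = 0"
proof (rule ccontr)
  assume nz: "X $ a $ b \<noteq> 0"
  define p where "p = - (X $ b $ b + 1) / (2 * X $ a $ b)"
  have "0 \<le> p * p * X $ a $ a + 2 * p * 1 * X $ a $ b + 1 * 1 * X $ b $ b"
    using assms(1) by (rule psd_two_axes_nonneg)
  also have "\<dots> = -1"
    using assms(2) nz by (simp add: p_def field_simps)
  finally show False by simp
qed

lemma psd_trace_zero_imp_zero:
  assumes "X \<in> psd_mats" "trace X = 0"
  shows "X = 0"
proof -
  have "\<forall>a\<in>UNIV. X $ a $ a = 0"
    using assms(2) unfolding trace_def
    by (rule sum_nonneg_eq_0_iff[THEN iffD1, rotated 2]) (auto intro: psd_diag_nonneg[OF assms(1)])
  then show ?thesis
    using psd_zero_diag_imp_zero_row[OF assms(1)] by (auto simp: vec_eq_iff)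
qed

lemma psd_trace_one_diag_zero_or_one_imp_matrix_unit:
  assumes psd: "X \<in> psd_mats" and tr: "trace X = 1" and diag: "\<And>i. X $ i $ i = 0 \<or> X $ i $ i = 1"
  obtains k where "X = matrix_unit k k"
proof -
  obtain k where "X $ k $ k \<noteq> 0"
    using tr by (force simp: trace_def)
  then have k: "X $ k $ k = 1"
    using diag by blast
  have others: "X $ i $ i = 0" if "i \<noteq> k" for i
  proof (rule ccontr)
    assume "X $ i $ i \<noteq> 0"
    then have "2 = X $ k $ k + X $ i $ i"
      using diag[of i] k by simp
    also have "\<dots> = (\<Sum>a\<in>{k, i}. X $ a $ a)"
      using that by simp
    also have "\<dots> \<le> trace X"
      unfolding trace_def using psd_diag_nonneg[OF psd] by (intro sum_mono2) auto
    finally show False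
      using tr by simp
  qed
  have "X $ a $ b = matrix_unit k k $ a $ b" for a b
  proof (cases "a = k \<and> b = k")
    case False
    then have "X $ a $ b = 0 \<or> X $ b $ a = 0"
      using others psd_zero_diag_imp_zero_row[OF psd] by blast
    moreover have "X $ a $ b = X $ b $ a"
      using psd by (simp add: psd_mats_iff sym_mats_iff)
    ultimately show ?thesis
      using False by auto
  qed (use k in simp)
  then show ?thesis
    by (intro that[of k]) (simp add: vec_eq_iff)
qed

section \<open>Normal vectors along curves in the cone over the spectrahedron\<close>

definition signed_psd_cone :: "'n::finite set set \<Rightarrow> 'n set set \<Rightarrow> (real^'n^'n) set" where
  "signed_psd_cone Ep Em = {X \<in> psd_mats.
      (\<forall>i j. {i,j} \<in> Ep \<longrightarrow> X $ i $ j \<ge> 0) \<and> (\<forall>i j. {i,j} \<in> Em \<longrightarrow> X $ i $ j \<le> 0)}"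

lemma specC_eq_trace_slice: "specC Ep Em = {X \<in> signed_psd_cone Ep Em. trace X = 1}"
  by (auto simp: specC_def signed_psd_cone_def)

lemma signed_psd_cone_scaleR:
  assumes "X \<in> signed_psd_cone Ep Em" "0 \<le> r"
  shows "r *\<^sub>R X \<in> signed_psd_cone Ep Em"
  using assms
  by (auto simp: signed_psd_cone_def psd_mats_iff sym_mats_iff scaleR_matrix_vector_assoc[symmetric]
      intro: mult_nonneg_nonneg mult_nonneg_nonpos)

lemma signed_psd_cone_diagonal_congruence:
  assumes X: "X \<in> signed_psd_cone Ep Em" and m: "\<And>a. 0 \<le> m a"
  shows "(\<chi> a b. m a * m b * X $ a $ b) \<in> signed_psd_cone Ep Em"
proof -
  let ?Y = "\<chi> a b. m a * m b * X $ a $ b"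
  have "x \<bullet> (?Y *v x) = (\<chi> a. m a * x $ a) \<bullet> (X *v (\<chi> a. m a * x $ a))" for x
    by (simp add: inner_vec_def matrix_vector_mult_def sum_distrib_left ac_simps)
  then have "?Y \<in> psd_mats"
    using X by (simp add: signed_psd_cone_def psd_mats_iff sym_mats_iff mult.commute)
  moreover have mm: "0 \<le> m a * m b" for a b
    using m by simp
  ultimately show ?thesis
    using X by (simp add: signed_psd_cone_def mult_nonneg_nonneg[OF mm] mult_nonneg_nonpos[OF mm])
qed

lemma normal_cone_specC_le:
  assumes c: "c \<in> normal_cone (specC Ep Em) X" and Y: "Y \<in> signed_psd_cone Ep Em"
  shows "c \<bullet> Y \<le> trace Y * (c \<bullet> X)"
proof -
  have psd: "Y \<in> psd_mats" using Y by (simp add: signed_psd_cone_def)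
  show ?thesis
  proof (cases "trace Y = 0")
    case True
    then show ?thesis using psd_trace_zero_imp_zero[OF psd] by simp
  next
    case False
    then have pos: "0 < trace Y"
      using psd_diag_nonneg[OF psd] by (simp add: trace_def sum_nonneg order_less_le)
    have "(1 / trace Y) *\<^sub>R Y \<in> specC Ep Em"
      using signed_psd_cone_scaleR[OF Y] pos by (simp add: specC_eq_trace_slice trace_scaleR)
    then have "c \<bullet> ((1 / trace Y) *\<^sub>R Y) \<le> c \<bullet> X"
      using c unfolding normal_cone_iff_inner by blast
    then show ?thesis using pos by (simp add: field_simps)
  qed
qed

lemma quadratic_nonpos_imp_linear_zero:
  fixes a b d :: real
  assumes "0 < d" and nonpos: "\<And>t. \<bar>t\<bar> < d \<Longrightarrow> t * a + t * t * b \<le> 0"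
  shows "a = 0"
proof (rule ccontr)
  assume "a \<noteq> 0"
  define s where "s = min (d / 2) (\<bar>a\<bar> / (2 * (\<bar>b\<bar> + 1)))"
  have "s \<le> \<bar>a\<bar> / (2 * (\<bar>b\<bar> + 1))"
    by (simp add: s_def)
  then have s: "0 < s" "s < d" "s * (2 * (\<bar>b\<bar> + 1)) \<le> \<bar>a\<bar>"
    using \<open>0 < d\<close> \<open>a \<noteq> 0\<close> by (auto simp: s_def le_divide_eq)
  define t where "t = sgn a * s"
  have "s * \<bar>b\<bar> < \<bar>a\<bar>" using s by (simp add: algebra_simps)
  then have "0 < s * \<bar>a\<bar> - s * s * \<bar>b\<bar>" using s by (simp add: algebra_simps)
  moreover have "s * \<bar>a\<bar> = t * a"
    by (simp add: t_def abs_sgn mult.commute)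
  moreover have "t * t = s * s"
    using \<open>a \<noteq> 0\<close> by (simp add: t_def sgn_real_def)
  then have "- (s * s * \<bar>b\<bar>) \<le> t * t * b"
    using mult_left_mono[of "- \<bar>b\<bar>" b "s * s"] by simp
  moreover have "t * a + t * t * b \<le> 0"
    using s \<open>a \<noteq> 0\<close> by (intro nonpos) (simp add: t_def abs_mult)
  ultimately show False by linarith
qed

lemma normal_cone_specC_orthogonal_to_curve:
  assumes X: "X \<in> specC Ep Em" and c: "c \<in> normal_cone (specC Ep Em) X" and "0 < d"
    and curve: "\<And>t. \<bar>t\<bar> < d \<Longrightarrow> X + t *\<^sub>R D + (t * t) *\<^sub>R Q \<in> signed_psd_cone Ep Em"
  shows "c \<bullet> (D - trace D *\<^sub>R X) = 0"
proof -
  have trX: "trace X = 1"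
    using X by (simp add: specC_eq_trace_slice)
  have "t * (c \<bullet> D - trace D * (c \<bullet> X)) + t * t * (c \<bullet> Q - trace Q * (c \<bullet> X)) \<le> 0"
    if "\<bar>t\<bar> < d" for t
  proof -
    have "c \<bullet> (X + t *\<^sub>R D + (t * t) *\<^sub>R Q) \<le> trace (X + t *\<^sub>R D + (t * t) *\<^sub>R Q) * (c \<bullet> X)"
      by (rule normal_cone_specC_le[OF c curve[OF that]])
    then show ?thesis
      using trX by (simp add: trace_add trace_scaleR inner_add_right algebra_simps)
  qed
  then have "c \<bullet> D - trace D * (c \<bullet> X) = 0"
    by (rule quadratic_nonpos_imp_linear_zero[OF \<open>0 < d\<close>])
  then show ?thesis
    by (simp add: inner_diff_right)
qed

section \<open>Vertices of the spectrahedron\<close>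

lemma vertex_specC_diag_zero_or_one:
  assumes "X \<in> vertices (specC Ep Em)"
  shows "X $ i $ i = 0 \<or> X $ i $ i = 1"
proof (rule ccontr)
  assume not01: "\<not> (X $ i $ i = 0 \<or> X $ i $ i = 1)"
  have X: "X \<in> specC Ep Em"
    and no_orth: "\<And>W. W \<in> sym_mats \<Longrightarrow> (\<forall>c\<in>normal_cone (specC Ep Em) X. c \<bullet> W = 0) \<Longrightarrow> W = 0"
    using assms by (auto simp: vertices_iff_no_orthogonal)
  then have cone: "X \<in> signed_psd_cone Ep Em"
    by (simp add: specC_eq_trace_slice)
  then have sym: "\<And>a b. X $ a $ b = X $ b $ a"
    by (simp add: signed_psd_cone_def psd_mats_iff sym_mats_iff)
  define \<delta> :: "'a \<Rightarrow> real" where "\<delta> a = of_bool (a = i)" for a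
  define D where "D = (\<chi> a b. (\<delta> a + \<delta> b) * X $ a $ b)"
  define Q where "Q = (\<chi> a b. \<delta> a * \<delta> b * X $ a $ b)"
  have curve: "X + t *\<^sub>R D + (t * t) *\<^sub>R Q \<in> signed_psd_cone Ep Em" if "\<bar>t\<bar> < 1" for t
  proof -
    \<comment> \<open>the curve is the congruence diag(m) X diag(m) with m = 1 + t e_i\<close>
    have "X + t *\<^sub>R D + (t * t) *\<^sub>R Q = (\<chi> a b. (1 + t * \<delta> a) * (1 + t * \<delta> b) * X $ a $ b)"
      by (simp add: vec_eq_iff D_def Q_def algebra_simps)
    also have "\<dots> \<in> signed_psd_cone Ep Em"
      using that by (intro signed_psd_cone_diagonal_congruence[OF cone]) (simp add: \<delta>_def abs_less_iff)
    finally show ?thesis .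
  qed
  define W where "W = D - trace D *\<^sub>R X"
  have "W \<in> sym_mats"
    using sym by (simp add: W_def D_def sym_mats_iff add.commute)
  moreover have "\<forall>c\<in>normal_cone (specC Ep Em) X. c \<bullet> W = 0"
    using normal_cone_specC_orthogonal_to_curve[OF X _ zero_less_one curve] by (simp add: W_def)
  ultimately have "W = 0"
    by (rule no_orth)
  moreover have "trace D = 2 * X $ i $ i"
    by (simp add: trace_def D_def \<delta>_def distrib_right sum.distrib flip: sum_distrib_left)
  then have "W $ i $ i = 2 * X $ i $ i * (1 - X $ i $ i)"
    by (simp add: W_def D_def \<delta>_def algebra_simps)
  ultimately show False
    using not01 by simp
qed

lemma rotation_curve_in_signed_psd_cone:
  assumes Em: "\<forall>e\<in>Em. card e = 2" and nonedge: "{k, j} \<notin> Ep \<union> Em" and "j \<noteq> k"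
    and t: "\<bar>t\<bar> < 1/2"
  shows "matrix_unit k k + t *\<^sub>R sym_matrix_unit k j
           + (t * t) *\<^sub>R (2 *\<^sub>R matrix_unit j j - 2 *\<^sub>R matrix_unit k k) \<in> signed_psd_cone Ep Em"
    (is "?Y \<in> _")
proof -
  have "\<bar>t\<bar> * \<bar>t\<bar> \<le> (1/2) * (1/2)"
    using t by (intro mult_mono) auto
  then have small: "t * t \<le> 1/4"
    by (simp add: abs_mult_self_eq)
  \<comment> \<open>the quadratic form (1 - 2t^2) x_k^2 + 2t x_k x_j + 2t^2 x_j^2 as a sum of squares\<close>
  have "x \<bullet> (?Y *v x) = 2 * (t * x $ j + x $ k / 2)\<^sup>2 + (1/2 - 2 * t * t) * (x $ k)\<^sup>2" for x
    by (simp add: sym_matrix_unit_def algebra_simps quadratic_form_matrix_unit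
        power2_eq_square flip: scaleR_matrix_vector_assoc)
  moreover have "?Y \<in> sym_mats"
    by (intro subspace_add subspace_scale subspace_diff subspace_sym_mats
        sym_matrix_unit_in_sym_mats matrix_unit_diag_in_sym_mats)
  ultimately have psd: "?Y \<in> psd_mats"
    using small by (simp add: psd_mats_iff)
  have off_diag: "?Y $ a $ b = 0" if "a \<noteq> b" "{a, b} \<in> Ep \<union> Em" for a b
  proof -
    have "{a, b} \<noteq> {k, j}"
      using that(2) nonedge by metis
    then have "\<not> (a = k \<and> b = j)" "\<not> (a = j \<and> b = k)"
      by (metis insert_commute)+
    moreover have "\<not> (a = k \<and> b = k)" "\<not> (a = j \<and> b = j)"
      using that(1) by auto
    ultimately show ?thesis
      unfolding sym_matrix_unit_def
      by (simp only: vector_add_component vector_scaleR_component vector_minus_component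
          matrix_unit_component if_False) simp
  qed
  have diag: "0 \<le> ?Y $ a $ a" for a
    using small \<open>j \<noteq> k\<close> by (cases "a = k"; cases "a = j") (simp_all add: sym_matrix_unit_def)
  have Em_off_diag: "a \<noteq> b" if "{a, b} \<in> Em" for a b
    using Em that by force
  show ?thesis
    unfolding signed_psd_cone_def
  proof (intro CollectI conjI allI impI)
    fix a b
    show "0 \<le> ?Y $ a $ b" if "{a, b} \<in> Ep"
      using that diag off_diag[of a b] by (cases "a = b") auto
    show "?Y $ a $ b \<le> 0" if "{a, b} \<in> Em"
      using that Em_off_diag off_diag[of a b] by auto
  qed (rule psd)
qed

lemma vertex_matrix_unit_imp_adjacent:
  assumes Em: "\<forall>e\<in>Em. card e = 2" and vertex: "matrix_unit k k \<in> vertices (specC Ep Em)"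
    and "j \<noteq> k"
  shows "{k, j} \<in> Ep \<union> Em"
proof (rule ccontr)
  assume nonedge: "{k, j} \<notin> Ep \<union> Em"
  let ?X = "matrix_unit k k"
  have X: "?X \<in> specC Ep Em"
    and no_orth: "\<And>W. W \<in> sym_mats \<Longrightarrow> (\<forall>c\<in>normal_cone (specC Ep Em) ?X. c \<bullet> W = 0) \<Longrightarrow> W = 0"
    using vertex by (auto simp: vertices_iff_no_orthogonal)
  have "trace (sym_matrix_unit k j) = 0"
    using \<open>j \<noteq> k\<close> by (simp add: sym_matrix_unit_def trace_add trace_matrix_unit)
  then have "\<forall>c\<in>normal_cone (specC Ep Em) ?X. c \<bullet> sym_matrix_unit k j = 0"
    using normal_cone_specC_orthogonal_to_curve[where d = "1/2", OF X _ _
        rotation_curve_in_signed_psd_cone[OF Em nonedge \<open>j \<noteq> k\<close>]]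
    by simp
  then have "sym_matrix_unit k j = 0"
    by (intro no_orth) (simp_all add: sym_matrix_unit_in_sym_mats)
  moreover have "sym_matrix_unit k j $ k $ j = 1"
    using \<open>j \<noteq> k\<close> by (simp add: sym_matrix_unit_def)
  ultimately show False
    by simp
qed

lemma matrix_unit_in_specC:
  assumes "\<forall>e\<in>Em. card e = 2"
  shows "matrix_unit k k \<in> specC Ep Em"
proof -
  have "{a} \<notin> Em" for a
    using assms by force
  moreover have "matrix_unit k k \<in> psd_mats"
    by (simp add: psd_mats_iff matrix_unit_diag_in_sym_mats quadratic_form_matrix_unit)
  ultimately show ?thesis
    by (auto simp: specC_def trace_matrix_unit)
qed

lemma normal_cone_matrix_unit_iff:
  "c \<in> normal_cone C (matrix_unit k k) \<longleftrightarrow> c \<in> sym_mats \<and> (\<forall>Y\<in>C. c \<bullet> Y \<le> c $ k $ k)"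
  by (simp add: normal_cone_iff_inner inner_commute[of c])

lemma matrix_unit_in_normal_cone:
  "matrix_unit k k \<in> normal_cone (specC Ep Em) (matrix_unit k k)"
  by (auto simp: normal_cone_matrix_unit_iff matrix_unit_diag_in_sym_mats specC_def
      dest: psd_diag_le_trace[of _ k])

lemma neg_matrix_unit_in_normal_cone:
  assumes "a \<noteq> k"
  shows "- matrix_unit a a \<in> normal_cone (specC Ep Em) (matrix_unit k k)"
  using assms
  by (simp add: normal_cone_matrix_unit_iff subspace_neg[OF subspace_sym_mats]
      matrix_unit_diag_in_sym_mats specC_def psd_diag_nonneg)

lemma signed_sym_matrix_unit_in_normal_cone:
  assumes "b \<noteq> k"
  shows "{k, b} \<in> Ep \<Longrightarrow> - sym_matrix_unit k b \<in> normal_cone (specC Ep Em) (matrix_unit k k)"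
    and "{k, b} \<in> Em \<Longrightarrow> sym_matrix_unit k b \<in> normal_cone (specC Ep Em) (matrix_unit k k)"
proof -
  have kk: "sym_matrix_unit k b $ k $ k = 0"
    using assms by (simp add: sym_matrix_unit_def)
  have "{b, k} = {k, b}"
    by (rule insert_commute)
  then have Ep: "0 \<le> Y $ k $ b" "0 \<le> Y $ b $ k" if "Y \<in> specC Ep Em" "{k, b} \<in> Ep" for Y
    using that by (simp_all add: specC_def)
  from \<open>{b, k} = {k, b}\<close> have Em: "Y $ k $ b \<le> 0" "Y $ b $ k \<le> 0"
    if "Y \<in> specC Ep Em" "{k, b} \<in> Em" for Y
    using that by (simp_all add: specC_def)
  show "- sym_matrix_unit k b \<in> normal_cone (specC Ep Em) (matrix_unit k k)" if "{k, b} \<in> Ep"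
  proof (unfold normal_cone_matrix_unit_iff, intro conjI ballI)
    fix Y assume "Y \<in> specC Ep Em"
    with Ep[OF this that] kk show "- sym_matrix_unit k b \<bullet> Y \<le> (- sym_matrix_unit k b) $ k $ k"
      by simp
  qed (simp add: subspace_neg[OF subspace_sym_mats] sym_matrix_unit_in_sym_mats)
  show "sym_matrix_unit k b \<in> normal_cone (specC Ep Em) (matrix_unit k k)" if "{k, b} \<in> Em"
  proof (unfold normal_cone_matrix_unit_iff, intro conjI ballI)
    fix Y assume "Y \<in> specC Ep Em"
    with Em[OF this that] kk show "sym_matrix_unit k b \<bullet> Y \<le> sym_matrix_unit k b $ k $ k"
      by simp
  qed (rule sym_matrix_unit_in_sym_mats)
qed

lemma sym_matrix_unit_minus_diag_in_normal_cone:
  assumes "a \<noteq> k" "b \<noteq> k"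
  shows "sym_matrix_unit a b - matrix_unit a a - matrix_unit b b
           \<in> normal_cone (specC Ep Em) (matrix_unit k k)" (is "?c \<in> _")
  unfolding normal_cone_matrix_unit_iff
proof
  show "?c \<in> sym_mats"
    by (intro subspace_diff subspace_sym_mats sym_matrix_unit_in_sym_mats matrix_unit_diag_in_sym_mats)
  show "\<forall>Y\<in>specC Ep Em. ?c \<bullet> Y \<le> ?c $ k $ k"
  proof
    fix Y assume "Y \<in> specC Ep Em"
    then have "Y \<in> psd_mats"
      by (simp add: specC_def)
    then have "0 \<le> 1 * 1 * Y $ a $ a + 2 * 1 * (- 1) * Y $ a $ b + (- 1) * (- 1) * Y $ b $ b"
      and "Y $ b $ a = Y $ a $ b"
      using psd_two_axes_nonneg[of Y 1 a "- 1" b] by (simp_all add: psd_mats_iff sym_mats_iff)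
    moreover have "?c $ k $ k = 0"
      using assms by (simp add: sym_matrix_unit_def)
    ultimately show "?c \<bullet> Y \<le> ?c $ k $ k"
      by (simp add: inner_diff_left)
  qed
qed

lemma full_degree_imp_vertex:
  assumes Em: "\<forall>e\<in>Em. card e = 2" and adjacent: "\<And>j. j \<noteq> k \<Longrightarrow> {k, j} \<in> Ep \<union> Em"
  shows "matrix_unit k k \<in> vertices (specC Ep Em)"
proof -
  let ?N = "normal_cone (specC Ep Em) (matrix_unit k k)"
  have "W = 0" if W: "W \<in> sym_mats" "\<forall>c\<in>?N. c \<bullet> W = 0" for W
  proof -
    have sym: "W $ a $ b = W $ b $ a" for a b
      using W(1) by (simp add: sym_mats_iff)
    have diag_k: "W $ k $ k = 0"
      using W(2) matrix_unit_in_normal_cone by fastforce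
    have diag: "W $ a $ a = 0" if "a \<noteq> k" for a
      using W(2) neg_matrix_unit_in_normal_cone[OF that] by fastforce
    have row_k: "W $ k $ b = 0" if "b \<noteq> k" for b
      using adjacent[OF that] W(2) signed_sym_matrix_unit_in_normal_cone[OF that] sym[of k b]
      by fastforce
    have off_diag: "W $ a $ b = 0" if "a \<noteq> k" "b \<noteq> k" for a b
      using W(2) sym_matrix_unit_minus_diag_in_normal_cone[OF that] sym[of a b] diag that
      by (fastforce simp: inner_diff_left)
    show "W = 0"
      unfolding vec_eq_iff
    proof (intro allI)
      fix a b
      show "W $ a $ b = 0 $ a $ b"
        using diag_k row_k off_diag sym[of a b] by (cases "a = k"; cases "b = k") auto
    qed
  qed
  then show ?thesis
    using matrix_unit_in_specC[OF Em] by (simp add: vertices_iff_no_orthogonal)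
qed

lemma graph_deg_eq_card_minus_one_iff:
  fixes E :: "'n::finite set set"
  assumes "\<forall>e\<in>E. card e = 2"
  shows "graph_deg E k = CARD('n) - 1 \<longleftrightarrow> (\<forall>j. j \<noteq> k \<longrightarrow> {k, j} \<in> E)"
proof -
  have "{k} \<notin> E"
    using assms by force
  then have neighbours: "{j. {k, j} \<in> E} \<subseteq> UNIV - {k}"
    by auto
  have "graph_deg E k = CARD('n) - 1 \<longleftrightarrow> card {j. {k, j} \<in> E} = card (UNIV - {k})"
    by (simp add: graph_deg_def card_Diff_singleton)
  also have "\<dots> \<longleftrightarrow> {j. {k, j} \<in> E} = UNIV - {k}"
    using card_subset_eq[OF finite neighbours] by (intro iffI) simp_all
  also have "\<dots> \<longleftrightarrow> (\<forall>j. j \<noteq> k \<longrightarrow> {k, j} \<in> E)"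
    using neighbours by blast
  finally show ?thesis .
qed

theorem theorem3p6:
  fixes Ep Em :: "'n::finite set set"
  assumes "\<forall>e\<in>Ep. card e = 2" and "\<forall>e\<in>Em. card e = 2"
  shows "vertices (specC Ep Em) =
           {ekek k | k. graph_deg (Ep \<union> Em) k = CARD('n) - 1}"
proof -
  have edges: "\<forall>e\<in>Ep \<union> Em. card e = 2"
    using assms by blast
  have "X \<in> vertices (specC Ep Em) \<longleftrightarrow> (\<exists>k. X = ekek k \<and> graph_deg (Ep \<union> Em) k = CARD('n) - 1)"
    for X
    unfolding graph_deg_eq_card_minus_one_iff[OF edges] ekek_eq_matrix_unit
  proof
    assume vertex: "X \<in> vertices (specC Ep Em)"
    then have "X \<in> psd_mats" "trace X = 1"
      by (simp_all add: vertices_def specC_def)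
    then obtain k where "X = matrix_unit k k"
      using vertex_specC_diag_zero_or_one[OF vertex] by (rule psd_trace_one_diag_zero_or_one_imp_matrix_unit)
    with vertex show "\<exists>k. X = matrix_unit k k \<and> (\<forall>j. j \<noteq> k \<longrightarrow> {k, j} \<in> Ep \<union> Em)"
      using vertex_matrix_unit_imp_adjacent[OF assms(2)] by blast
  qed (auto intro: full_degree_imp_vertex[OF assms(2)])
  then show ?thesis
    by blast
qed

end
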